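(* Let $\mu$ be the uniform probability measure on $\{-1,1\}^n$. There exists a universal constant $\kappa>0$ such that for every continuously differentiable $f:\mathbb{R}^n\to\mathbb{R}$, $$\log\int e^f\,d\mu\le\sup_{y\in[-1,1]^n}\{f(y)-I(y)\}+\kappa\, b(V),$$ where $V=\nabla f([-1,1]^n)$.
   Context: $I(x)=\sum_{i=1}^n\big(\frac{1+x_i}{2}\log(1+x_i)+\frac{1-x_i}{2}\log(1-x_i)\big)$ for $x\in[-1,1]^n$ and $+\infty$ otherwise (equivalently $I(y)=H(\mu_y|\mu)$ where $\mu_y$ is the product measure on $\{-1,1\}^n$ with mean $y$). $b(V)=\mathbb{E}\sup_{\xi\in V}\langle\xi,\varepsilon\rangle$ with $\varepsilon$ uniform on $\{-1,1\}^n$. *)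

theory Defs
  imports "HOL-Analysis.Analysis" "HOL-Probability.Probability"
begin

text \<open>Points of R^n are encoded as functions nat => real vanishing at indices >= n.\<close>

definition Rn :: "nat \<Rightarrow> (nat \<Rightarrow> real) set" where
  "Rn n = {x. \<forall>i\<ge>n. x i = 0}"

definition cube :: "nat \<Rightarrow> (nat \<Rightarrow> real) set" where
  "cube n = {x \<in> Rn n. \<forall>i<n. \<bar>x i\<bar> \<le> 1}"

definition signs :: "nat \<Rightarrow> (nat \<Rightarrow> real) set" where
  "signs n = {x \<in> Rn n. \<forall>i<n. x i = 1 \<or> x i = -1}"

definition ip :: "nat \<Rightarrow> (nat \<Rightarrow> real) \<Rightarrow> (nat \<Rightarrow> real) \<Rightarrow> real" where
  "ip n x y = (\<Sum>i<n. x i * y i)"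

definition enorm :: "nat \<Rightarrow> (nat \<Rightarrow> real) \<Rightarrow> real" where
  "enorm n x = sqrt (\<Sum>i<n. (x i)\<^sup>2)"

definition has_grad :: "nat \<Rightarrow> ((nat \<Rightarrow> real) \<Rightarrow> real) \<Rightarrow> (nat \<Rightarrow> real) \<Rightarrow> (nat \<Rightarrow> real) \<Rightarrow> bool" where
  "has_grad n f g x \<longleftrightarrow> g \<in> Rn n \<and>
     (\<forall>e>0. \<exists>d>0. \<forall>h\<in>Rn n. enorm n h < d \<longrightarrow>
        \<bar>f (\<lambda>i. x i + h i) - f x - ip n g h\<bar> \<le> e * enorm n h)"

definition C1_grad :: "nat \<Rightarrow> ((nat \<Rightarrow> real) \<Rightarrow> real) \<Rightarrow> ((nat \<Rightarrow> real) \<Rightarrow> (nat \<Rightarrow> real)) \<Rightarrow> bool" where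
  "C1_grad n f g \<longleftrightarrow> (\<forall>x\<in>Rn n. has_grad n f (g x) x) \<and>
     (\<forall>x\<in>Rn n. \<forall>e>0. \<exists>d>0. \<forall>y\<in>Rn n. enorm n (\<lambda>i. y i - x i) < d \<longrightarrow> enorm n (\<lambda>i. g y i - g x i) < e)"

definition xlnx :: "real \<Rightarrow> real" where
  "xlnx t = (if t = 0 then 0 else t * ln t)"

definition Ient :: "nat \<Rightarrow> (nat \<Rightarrow> real) \<Rightarrow> real" where
  "Ient n y = (\<Sum>i<n. xlnx (1 + y i) / 2 + xlnx (1 - y i) / 2)"

definition mu :: "nat \<Rightarrow> (nat \<Rightarrow> real) pmf" where
  "mu n = pmf_of_set (signs n)"

definition bV :: "nat \<Rightarrow> (nat \<Rightarrow> real) set \<Rightarrow> real" where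
  "bV n V = measure_pmf.expectation (mu n) (\<lambda>e. Sup ((\<lambda>\<xi>. ip n \<xi> e) ` V))"

end

theory Submission
  imports Defs
begin

text \<open>
  Write \<open>M\<close> for the supremum on the right and \<open>h\<^sub>V\<close> for the support function of \<open>V\<close>.
  By the mean value theorem, \<open>f x \<le> M + I z + h\<^sub>V (x - z)\<close> for every sign vector \<open>x\<close> and every
  \<open>z\<close> in the cube. Peeling off one coordinate at a time, such a bound yields
  \<open>log \<integral>e\<^sup>f d\<mu> \<le> M + E h\<^sub>V (\<epsilon> + \<epsilon>')\<close> for independent uniform sign vectors \<open>\<epsilon>, \<epsilon>'\<close>.
  In each step the Gibbs identity
  \<open>log ((A + B) / 2) = (1 + m) / 2 log A + (1 - m) / 2 log B - I m\<close>, where \<open>m = (A - B) / (A + B)\<close>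
  is the mean of the last sign under the measure tilted by \<open>e\<^sup>f\<close>, fixes the last coordinate of
  \<open>z\<close> to be \<open>m\<close>; convexity of \<open>h\<^sub>V\<close> in that coordinate then compares the centred variable
  \<open>\<epsilon>\<^sub>n - m\<close> with the symmetric one \<open>\<epsilon>\<^sub>n + \<epsilon>'\<^sub>n\<close>. Finally, subadditivity of \<open>h\<^sub>V\<close> gives
  \<open>E h\<^sub>V (\<epsilon> + \<epsilon>') \<le> 2 b(V)\<close>, so \<open>\<kappa> = 2\<close>.
\<close>

section \<open>Averages over sign vectors\<close>

lemma signs_0: "signs 0 = {\<lambda>_. 0}"
  by (auto simp: signs_def Rn_def)

lemma signs_Suc: "signs (Suc n) = (\<lambda>x. x(n := 1)) ` signs n \<union> (\<lambda>x. x(n := -1)) ` signs n"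
proof (intro equalityI subsetI)
  fix x assume x: "x \<in> signs (Suc n)"
  then have x0: "x(n := 0) \<in> signs n" by (auto simp: signs_def Rn_def)
  have "x n = 1 \<or> x n = -1" using x by (auto simp: signs_def)
  moreover have "x = (x(n := 0))(n := x n)" by simp
  ultimately have "x = (x(n := 0))(n := 1) \<or> x = (x(n := 0))(n := -1)" by auto
  then show "x \<in> (\<lambda>x. x(n := 1)) ` signs n \<union> (\<lambda>x. x(n := -1)) ` signs n"
    using x0 by blast
qed (auto simp: signs_def Rn_def less_Suc_eq)

lemma inj_on_fun_upd_signs: "inj_on (\<lambda>x. x(n := s)) (signs n)"
proof (rule inj_onI)
  fix x y assume "x \<in> signs n" "y \<in> signs n" and upd: "x(n := s) = y(n := s)"
  then have "x n = y n" by (simp add: signs_def Rn_def)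
  with upd show "x = y" by (metis fun_upd_triv fun_upd_upd)
qed

lemma finite_signs: "finite (signs n)"
  by (induction n) (auto simp: signs_0 signs_Suc)

lemma sum_signs_Suc:
  "(\<Sum>x\<in>signs (Suc n). G x) = (\<Sum>x\<in>signs n. G (x(n := 1)) + G (x(n := -1)))"
proof -
  have disj: "(\<lambda>x. x(n := 1)) ` signs n \<inter> (\<lambda>x. x(n := -1)) ` signs n = {}"
    by (auto simp: fun_eq_iff) (metis fun_upd_same one_neq_neg_one)
  have "(\<Sum>x\<in>signs (Suc n). G x)
      = (\<Sum>x\<in>(\<lambda>x. x(n := 1)) ` signs n. G x) + (\<Sum>x\<in>(\<lambda>x. x(n := -1)) ` signs n. G x)"
    unfolding signs_Suc by (rule sum.union_disjoint) (auto simp: finite_signs disj)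
  also have "\<dots> = (\<Sum>x\<in>signs n. G (x(n := 1))) + (\<Sum>x\<in>signs n. G (x(n := -1)))"
    by (simp add: sum.reindex inj_on_fun_upd_signs)
  finally show ?thesis by (simp add: sum.distrib)
qed

lemma card_signs: "card (signs n) = 2 ^ n"
proof (induction n)
  case (Suc n)
  have "card (signs (Suc n)) = (\<Sum>x\<in>signs (Suc n). 1::nat)" by simp
  also have "\<dots> = (\<Sum>x\<in>signs n. 2)" by (subst sum_signs_Suc) simp
  finally show ?case using Suc by simp
qed (simp add: signs_0)

lemma signs_nonempty: "signs n \<noteq> {}"
  using card_signs[of n] by auto

lemma signs_subset_cube: "signs n \<subseteq> cube n"
  by (auto simp: signs_def cube_def)

lemma zero_in_cube: "(\<lambda>_. 0) \<in> cube n"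
  by (auto simp: cube_def Rn_def)

definition sign_avg :: "nat \<Rightarrow> ((nat \<Rightarrow> real) \<Rightarrow> real) \<Rightarrow> real" where
  "sign_avg n G = (\<Sum>x\<in>signs n. G x) / 2 ^ n"

lemma expectation_mu: "measure_pmf.expectation (mu n) G = sign_avg n G"
  unfolding mu_def sign_avg_def
  by (simp add: integral_pmf_of_set finite_signs signs_nonempty card_signs)

lemma sign_avg_Suc:
  "sign_avg (Suc n) G = (sign_avg n (\<lambda>x. G (x(n := 1))) + sign_avg n (\<lambda>x. G (x(n := -1)))) / 2"
  unfolding sign_avg_def by (simp add: sum_signs_Suc sum.distrib field_simps)

lemma sign_avg_mono: "(\<And>x. x \<in> signs n \<Longrightarrow> G x \<le> H x) \<Longrightarrow> sign_avg n G \<le> sign_avg n H"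
  unfolding sign_avg_def by (intro divide_right_mono sum_mono) auto

lemma sign_avg_add: "sign_avg n (\<lambda>x. G x + H x) = sign_avg n G + sign_avg n H"
  unfolding sign_avg_def by (simp add: sum.distrib add_divide_distrib)

lemma sign_avg_cmult: "sign_avg n (\<lambda>x. c * G x) = c * sign_avg n G"
  unfolding sign_avg_def by (simp add: sum_distrib_left)

lemma sign_avg_divide: "sign_avg n (\<lambda>x. G x / c) = sign_avg n G / c"
  unfolding sign_avg_def by (simp add: sum_divide_distrib mult.commute)

lemma sign_avg_const: "sign_avg n (\<lambda>_. c) = c"
  unfolding sign_avg_def by (simp add: card_signs)

lemma sign_avg_pos: "(\<And>x. G x > 0) \<Longrightarrow> sign_avg n G > 0"
  unfolding sign_avg_def using finite_signs signs_nonempty by (intro divide_pos_pos sum_pos) auto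

lemma convex_on_sign_avg:
  fixes G :: "(nat \<Rightarrow> real) \<Rightarrow> real \<Rightarrow> real"
  assumes "\<And>x. convex_on UNIV (G x)"
  shows "convex_on UNIV (\<lambda>t. sign_avg n (\<lambda>x. G x t))"
proof (rule convex_onI)
  fix s a b :: real assume "0 < s" "s < 1"
  then have "G x ((1 - s) *\<^sub>R a + s *\<^sub>R b) \<le> (1 - s) * G x a + s * G x b" for x
    using convex_onD[OF assms] by simp
  then have "sign_avg n (\<lambda>x. G x ((1 - s) *\<^sub>R a + s *\<^sub>R b))
      \<le> sign_avg n (\<lambda>x. (1 - s) * G x a + s * G x b)"
    by (rule sign_avg_mono)
  then show "sign_avg n (\<lambda>x. G x ((1 - s) *\<^sub>R a + s *\<^sub>R b))
      \<le> (1 - s) * sign_avg n (\<lambda>x. G x a) + s * sign_avg n (\<lambda>x. G x b)"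
    by (simp add: sign_avg_add sign_avg_cmult)
qed simp

definition pair_avg :: "nat \<Rightarrow> ((nat \<Rightarrow> real) \<Rightarrow> real) \<Rightarrow> real" where
  "pair_avg n P = sign_avg n (\<lambda>e. sign_avg n (\<lambda>e'. P (\<lambda>i. e i + e' i)))"

lemma pair_avg_Suc:
  "pair_avg (Suc n) P = (pair_avg n (\<lambda>u. P (u(n := 2))) + 2 * pair_avg n (\<lambda>u. P (u(n := 0)))
      + pair_avg n (\<lambda>u. P (u(n := -2)))) / 4"
proof -
  have upd: "(\<lambda>i. (e(n := a)) i + (e'(n := b)) i) = (\<lambda>i. e i + e' i)(n := a + b)"
    for e e' :: "nat \<Rightarrow> real" and a b by (auto simp: fun_eq_iff)
  show ?thesis
    unfolding pair_avg_def sign_avg_Suc upd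
    by (simp add: sign_avg_add sign_avg_divide field_simps)
qed

lemma convex_on_pair_avg:
  fixes Q :: "(nat \<Rightarrow> real) \<Rightarrow> real \<Rightarrow> real"
  assumes "\<And>u. convex_on UNIV (Q u)"
  shows "convex_on UNIV (\<lambda>t. pair_avg n (\<lambda>u. Q u t))"
  unfolding pair_avg_def
  by (rule convex_on_sign_avg[of "\<lambda>e t. sign_avg n (\<lambda>e'. Q (\<lambda>i. e i + e' i) t)"])
    (intro convex_on_sign_avg assms)

lemma pair_avg_le_twice:
  assumes "\<And>u v. S (\<lambda>i. u i + v i) \<le> S u + S v"
  shows "pair_avg n S \<le> 2 * sign_avg n S"
proof -
  have "pair_avg n S \<le> sign_avg n (\<lambda>e. sign_avg n (\<lambda>e'. S e + S e'))"
    unfolding pair_avg_def by (intro sign_avg_mono assms)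
  also have "\<dots> = 2 * sign_avg n S"
    by (simp add: sign_avg_add sign_avg_const)
  finally show ?thesis .
qed

definition coordinatewise_convex :: "((nat \<Rightarrow> real) \<Rightarrow> real) \<Rightarrow> bool" where
  "coordinatewise_convex P \<longleftrightarrow> (\<forall>u k. convex_on UNIV (\<lambda>t. P (u(k := t))))"

lemma coordinatewise_convex_fun_upd:
  assumes "coordinatewise_convex P"
  shows "coordinatewise_convex (\<lambda>u. P (u(n := c)))"
  unfolding coordinatewise_convex_def
proof (intro allI)
  fix u k
  show "convex_on UNIV (\<lambda>t. P (u(k := t, n := c)))"
  proof (cases "k = n")
    case True
    then show ?thesis by (simp add: convex_on_const)
  next
    case False
    then have "u(k := t, n := c) = u(n := c, k := t)" for t
      by (simp add: fun_upd_twist)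
    then show ?thesis
      using assms by (simp add: coordinatewise_convex_def)
  qed
qed

section \<open>The one-coordinate step\<close>

definition bit_entropy :: "real \<Rightarrow> real" where
  "bit_entropy m = xlnx (1 + m) / 2 + xlnx (1 - m) / 2"

lemma Ient_eq_sum_bit_entropy: "Ient n y = (\<Sum>i<n. bit_entropy (y i))"
  by (simp add: Ient_def bit_entropy_def)

lemma Ient_fun_upd: "Ient (Suc n) (z(n := m)) = Ient n z + bit_entropy m"
proof -
  have "(\<Sum>i<n. bit_entropy ((z(n := m)) i)) = (\<Sum>i<n. bit_entropy (z i))"
    by (intro sum.cong) auto
  then show ?thesis by (simp add: Ient_eq_sum_bit_entropy)
qed

lemma xlnx_ge: "t \<ge> 0 \<Longrightarrow> xlnx t \<ge> t - 1"
proof (cases "t = 0")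
  case False
  assume "t \<ge> 0"
  with False have t: "t > 0" by simp
  have "ln (1 / t) \<le> 1 / t - 1" using t by (intro ln_le_minus_one) simp
  then have "t * (- ln t) \<le> t * (1 / t - 1)" using t by (intro mult_left_mono) (auto simp: ln_div)
  then show ?thesis using t by (simp add: xlnx_def algebra_simps)
qed (simp add: xlnx_def)

lemma bit_entropy_nonneg:
  assumes "\<bar>m\<bar> \<le> 1"
  shows "bit_entropy m \<ge> 0"
proof -
  have "xlnx (1 + m) \<ge> m" "xlnx (1 - m) \<ge> - m"
    using assms xlnx_ge[of "1 + m"] xlnx_ge[of "1 - m"] by auto
  then show ?thesis by (simp add: bit_entropy_def)
qed

lemma Ient_nonneg: "y \<in> cube n \<Longrightarrow> Ient n y \<ge> 0"
  unfolding Ient_eq_sum_bit_entropy by (intro sum_nonneg bit_entropy_nonneg) (auto simp: cube_def)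

lemma ln_mean_eq_gibbs:
  fixes A B :: real
  assumes "A > 0" "B > 0" and m: "m = (A - B) / (A + B)"
  shows "ln ((A + B) / 2) = (1 + m) / 2 * ln A + (1 - m) / 2 * ln B - bit_entropy m"
proof -
  have plus: "1 + m = 2 * A / (A + B)" and minus: "1 - m = 2 * B / (A + B)"
    using assms by (simp_all add: field_simps)
  have "bit_entropy m = (1 + m) / 2 * (ln 2 + ln A - ln (A + B)) + (1 - m) / 2 * (ln 2 + ln B - ln (A + B))"
    using assms(1,2) unfolding bit_entropy_def xlnx_def plus minus by (simp add: ln_div ln_mult)
  also have "\<dots> = (1 + m) / 2 * ln A + (1 - m) / 2 * ln B + ln 2 - ln (A + B)"
    by (simp add: field_simps)
  finally show ?thesis
    using assms(1,2) by (simp add: ln_div)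
qed

text \<open>The left side is \<open>E \<psi> (\<epsilon> - m)\<close> for a sign \<open>\<epsilon>\<close> of mean \<open>m\<close>, the right side
  \<open>E \<psi> (\<epsilon> + \<epsilon>')\<close> for two independent fair signs.\<close>

lemma convex_biased_sign_le_sign_sum:
  fixes \<psi> :: "real \<Rightarrow> real"
  assumes "convex_on UNIV \<psi>" and "-1 \<le> m" "m \<le> 1"
  shows "(1 + m) / 2 * \<psi> (1 - m) + (1 - m) / 2 * \<psi> (-1 - m) \<le> (\<psi> 2 + 2 * \<psi> 0 + \<psi> (-2)) / 4"
proof -
  define \<alpha> \<beta> where "\<alpha> = (1 + m) / 2" and "\<beta> = (1 - m) / 2"
  have ab: "\<alpha> \<ge> 0" "\<beta> \<ge> 0" "\<alpha> + \<beta> = 1"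
    using assms(2,3) by (auto simp: \<alpha>_def \<beta>_def field_simps)
  have convex: "\<psi> (a * x + b * y) \<le> a * \<psi> x + b * \<psi> y" if "a \<ge> 0" "b \<ge> 0" "a + b = 1" for a b x y
    using assms(1) that by (simp add: convex_on_def)
  have "\<beta> * 2 = 1 - m" "- (\<alpha> * 2) = -1 - m"
    by (simp_all add: \<alpha>_def \<beta>_def field_simps)
  have right: "\<psi> (1 - m) \<le> \<alpha> * \<psi> 0 + \<beta> * \<psi> 2"
    using convex[of \<alpha> \<beta> 0 2] ab by (simp add: \<open>\<beta> * 2 = 1 - m\<close>)
  have left: "\<psi> (-1 - m) \<le> \<beta> * \<psi> 0 + \<alpha> * \<psi> (-2)"
    using convex[of \<beta> \<alpha> 0 "-2"] ab by (simp add: \<open>- (\<alpha> * 2) = -1 - m\<close>)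
  have mid: "\<psi> 0 \<le> (\<psi> 2 + \<psi> (-2)) / 2"
    using convex[of "1/2" "1/2" 2 "-2"] by simp
  have "\<alpha> * \<beta> \<le> 1 / 4"
    using ab(3) by (simp add: \<alpha>_def \<beta>_def field_simps)
  have "(1 + m) / 2 * \<psi> (1 - m) + (1 - m) / 2 * \<psi> (-1 - m)
      \<le> \<alpha> * (\<alpha> * \<psi> 0 + \<beta> * \<psi> 2) + \<beta> * (\<beta> * \<psi> 0 + \<alpha> * \<psi> (-2))"
    unfolding \<alpha>_def[symmetric] \<beta>_def[symmetric] using right left ab
    by (intro add_mono mult_left_mono) auto
  also have "\<dots> = (\<psi> 2 + 2 * \<psi> 0 + \<psi> (-2)) / 4 - (1 / 4 - \<alpha> * \<beta>) * (\<psi> 2 + \<psi> (-2) - 2 * \<psi> 0)"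
    by (simp add: \<alpha>_def \<beta>_def field_simps)
  also have "\<dots> \<le> (\<psi> 2 + 2 * \<psi> 0 + \<psi> (-2)) / 4"
  proof -
    have "0 \<le> (1 / 4 - \<alpha> * \<beta>) * (\<psi> 2 + \<psi> (-2) - 2 * \<psi> 0)"
      using \<open>\<alpha> * \<beta> \<le> 1 / 4\<close> mid by (intro mult_nonneg_nonneg) auto
    then show ?thesis by linarith
  qed
  finally show ?thesis .
qed

lemma ln_mean_le_sign_sum:
  fixes A B c :: real and \<psi> :: "real \<Rightarrow> real"
  assumes "A > 0" "B > 0" and m: "m = (A - B) / (A + B)" and "convex_on UNIV \<psi>"
    and A: "ln A \<le> c + bit_entropy m + \<psi> (1 - m)"
    and B: "ln B \<le> c + bit_entropy m + \<psi> (-1 - m)"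
  shows "ln ((A + B) / 2) \<le> c + (\<psi> 2 + 2 * \<psi> 0 + \<psi> (-2)) / 4"
proof -
  have m_bounds: "-1 \<le> m" "m \<le> 1"
    using assms(1,2) by (auto simp: m field_simps)
  have "ln ((A + B) / 2) = (1 + m) / 2 * ln A + (1 - m) / 2 * ln B - bit_entropy m"
    using assms(1-3) by (rule ln_mean_eq_gibbs)
  also have "\<dots> \<le> (1 + m) / 2 * (c + bit_entropy m + \<psi> (1 - m))
      + (1 - m) / 2 * (c + bit_entropy m + \<psi> (-1 - m)) - bit_entropy m"
    using A B m_bounds by (intro diff_right_mono add_mono mult_left_mono) auto
  also have "\<dots> = c + ((1 + m) / 2 * \<psi> (1 - m) + (1 - m) / 2 * \<psi> (-1 - m))"
    by (simp add: field_simps)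
  also have "\<dots> \<le> c + (\<psi> 2 + 2 * \<psi> 0 + \<psi> (-2)) / 4"
    using convex_biased_sign_le_sign_sum[OF assms(4) m_bounds] by simp
  finally show ?thesis .
qed

lemma ln_sign_avg_exp_le:
  assumes "coordinatewise_convex P"
    and "\<And>x z. x \<in> signs n \<Longrightarrow> z \<in> cube n \<Longrightarrow> F x \<le> M + Ient n z + P (\<lambda>i. x i - z i)"
  shows "ln (sign_avg n (\<lambda>x. exp (F x))) \<le> M + pair_avg n P"
  using assms
proof (induction n arbitrary: F P M)
  case 0
  have "F (\<lambda>_. 0) \<le> M + P (\<lambda>_. 0)"
    using "0.prems"(2)[of "\<lambda>_. 0" "\<lambda>_. 0"] by (simp add: signs_0 zero_in_cube Ient_def)
  then show ?case by (simp add: sign_avg_def pair_avg_def signs_0)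
next
  case (Suc n)
  define A where "A s = sign_avg n (\<lambda>x. exp (F (x(n := s))))" for s
  define m where "m = (A 1 - A (-1)) / (A 1 + A (-1))"
  define \<psi> where "\<psi> t = pair_avg n (\<lambda>u. P (u(n := t)))" for t
  have A_pos: "A s > 0" for s
    unfolding A_def by (rule sign_avg_pos) simp
  have "\<bar>m\<bar> \<le> 1"
    unfolding m_def using A_pos[of 1] A_pos[of "-1"] by (auto simp: abs_le_iff field_simps)
  have ln_A: "ln (A s) \<le> (M + bit_entropy m) + \<psi> (s - m)" if "s = 1 \<or> s = -1" for s
    unfolding A_def \<psi>_def
  proof (rule Suc.IH)
    show "coordinatewise_convex (\<lambda>u. P (u(n := s - m)))"
      using Suc.prems(1) by (rule coordinatewise_convex_fun_upd)
    fix x z assume "x \<in> signs n" "z \<in> cube n"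
    then have "x(n := s) \<in> signs (Suc n)" "z(n := m) \<in> cube (Suc n)"
      using that \<open>\<bar>m\<bar> \<le> 1\<close> by (auto simp: signs_def cube_def Rn_def less_Suc_eq)
    then have "F (x(n := s)) \<le> M + Ient (Suc n) (z(n := m)) + P (\<lambda>i. (x(n := s)) i - (z(n := m)) i)"
      by (rule Suc.prems(2))
    moreover have "(\<lambda>i. (x(n := s)) i - (z(n := m)) i) = (\<lambda>i. x i - z i)(n := s - m)"
      by (auto simp: fun_eq_iff)
    ultimately show "F (x(n := s)) \<le> M + bit_entropy m + Ient n z + P ((\<lambda>i. x i - z i)(n := s - m))"
      by (simp add: Ient_fun_upd)
  qed
  have "convex_on UNIV \<psi>"
    unfolding \<psi>_def using Suc.prems(1)
    by (intro convex_on_pair_avg) (simp add: coordinatewise_convex_def)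
  then have "ln ((A 1 + A (-1)) / 2) \<le> M + (\<psi> 2 + 2 * \<psi> 0 + \<psi> (-2)) / 4"
    using ln_A[of 1] ln_A[of "-1"] A_pos by (intro ln_mean_le_sign_sum[OF _ _ m_def]) auto
  then show ?case
    by (simp add: sign_avg_Suc pair_avg_Suc A_def \<psi>_def)
qed

section \<open>Support functions\<close>

definition support_fun :: "nat \<Rightarrow> (nat \<Rightarrow> real) set \<Rightarrow> (nat \<Rightarrow> real) \<Rightarrow> real" where
  "support_fun n V u = Sup ((\<lambda>\<xi>. ip n \<xi> u) ` V)"

lemma bV_eq_sign_avg_support_fun: "bV n V = sign_avg n (support_fun n V)"
  unfolding bV_def support_fun_def expectation_mu ..

lemma ip_linear: "ip n \<xi> (\<lambda>i. a * u i + b * v i) = a * ip n \<xi> u + b * ip n \<xi> v"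
  unfolding ip_def by (simp add: sum.distrib sum_distrib_left algebra_simps)

lemma ip_le_l1_bound:
  assumes "(\<Sum>i<n. \<bar>\<xi> i\<bar>) \<le> B"
  shows "ip n \<xi> u \<le> B * (\<Sum>i<n. \<bar>u i\<bar>)"
proof -
  have "ip n \<xi> u \<le> (\<Sum>i<n. \<bar>\<xi> i\<bar> * \<bar>u i\<bar>)"
    unfolding ip_def by (intro sum_mono) (metis abs_ge_self abs_mult)
  also have "\<dots> \<le> (\<Sum>i<n. \<bar>\<xi> i\<bar> * (\<Sum>j<n. \<bar>u j\<bar>))"
    by (intro sum_mono mult_left_mono member_le_sum) auto
  also have "\<dots> = (\<Sum>i<n. \<bar>\<xi> i\<bar>) * (\<Sum>j<n. \<bar>u j\<bar>)"
    by (simp add: sum_distrib_right)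
  also have "\<dots> \<le> B * (\<Sum>j<n. \<bar>u j\<bar>)"
    using assms by (intro mult_right_mono sum_nonneg) auto
  finally show ?thesis .
qed

context
  fixes n :: nat and V :: "(nat \<Rightarrow> real) set" and B :: real
  assumes V_nonempty: "V \<noteq> {}"
    and V_bounded: "\<And>\<xi>. \<xi> \<in> V \<Longrightarrow> (\<Sum>i<n. \<bar>\<xi> i\<bar>) \<le> B"
begin

lemma support_fun_upper: "\<xi> \<in> V \<Longrightarrow> ip n \<xi> u \<le> support_fun n V u"
  unfolding support_fun_def using ip_le_l1_bound[OF V_bounded]
  by (intro cSup_upper bdd_aboveI2[of _ _ "B * (\<Sum>i<n. \<bar>u i\<bar>)"]) auto

lemma support_fun_least: "(\<And>\<xi>. \<xi> \<in> V \<Longrightarrow> ip n \<xi> u \<le> c) \<Longrightarrow> support_fun n V u \<le> c"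
  unfolding support_fun_def using V_nonempty by (intro cSup_least) auto

lemma support_fun_le_l1: "support_fun n V u \<le> B * (\<Sum>i<n. \<bar>u i\<bar>)"
  by (intro support_fun_least ip_le_l1_bound V_bounded)

lemma support_fun_add_le:
  "support_fun n V (\<lambda>i. u i + v i) \<le> support_fun n V u + support_fun n V v"
proof (rule support_fun_least)
  fix \<xi> assume "\<xi> \<in> V"
  then have "ip n \<xi> u + ip n \<xi> v \<le> support_fun n V u + support_fun n V v"
    by (intro add_mono support_fun_upper)
  then show "ip n \<xi> (\<lambda>i. u i + v i) \<le> support_fun n V u + support_fun n V v"
    using ip_linear[of n \<xi> 1 u 1 v] by simp
qed

lemma coordinatewise_convex_support_fun: "coordinatewise_convex (support_fun n V)"
  unfolding coordinatewise_convex_def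
proof (intro allI convex_onI)
  fix u k and s a b :: real assume s: "0 < s" "s < 1"
  show "support_fun n V (u(k := (1 - s) *\<^sub>R a + s *\<^sub>R b))
      \<le> (1 - s) * support_fun n V (u(k := a)) + s * support_fun n V (u(k := b))"
  proof (rule support_fun_least)
    fix \<xi> assume "\<xi> \<in> V"
    have upd: "u(k := (1 - s) *\<^sub>R a + s *\<^sub>R b) = (\<lambda>i. (1 - s) * (u(k := a)) i + s * (u(k := b)) i)"
      by (auto simp: fun_eq_iff algebra_simps)
    have "(1 - s) * ip n \<xi> (u(k := a)) + s * ip n \<xi> (u(k := b))
        \<le> (1 - s) * support_fun n V (u(k := a)) + s * support_fun n V (u(k := b))"
      using s \<open>\<xi> \<in> V\<close> by (intro add_mono mult_left_mono support_fun_upper) auto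
    then show "ip n \<xi> (u(k := (1 - s) *\<^sub>R a + s *\<^sub>R b))
        \<le> (1 - s) * support_fun n V (u(k := a)) + s * support_fun n V (u(k := b))"
      unfolding upd ip_linear .
  qed
qed simp

end

section \<open>Calculus on the cube\<close>

lemma abs_le_enorm: "i < n \<Longrightarrow> \<bar>u i\<bar> \<le> enorm n u"
  unfolding enorm_def by (metis real_sqrt_abs real_sqrt_le_mono lessThan_iff finite_lessThan
    member_le_sum zero_le_power2)

lemma enorm_le_sum_abs: "enorm n u \<le> (\<Sum>i<n. \<bar>u i\<bar>)"
  using L2_set_le_sum_abs[of u "{..<n}"] by (simp add: enorm_def L2_set_def)

lemma enorm_scale: "enorm n (\<lambda>i. h * u i) = \<bar>h\<bar> * enorm n u"
  by (simp add: enorm_def power_mult_distrib real_sqrt_mult flip: sum_distrib_left)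

lemma ip_scale: "ip n \<xi> (\<lambda>i. h * u i) = h * ip n \<xi> u"
  unfolding ip_def by (simp add: sum_distrib_left algebra_simps)

lemma cube_eq_PiE: "cube n = PiE UNIV (\<lambda>i. if i < n then {-1..1} else {0})"
  by (auto simp: cube_def Rn_def PiE_UNIV_domain abs_le_iff split: if_splits)

lemma compact_cube: "compact (cube n)"
proof -
  have "compactin (product_topology (\<lambda>_. euclidean) UNIV)
      (PiE UNIV (\<lambda>i. if i < n then {-1..1::real} else {0}))"
    by (subst compactin_PiE) auto
  then show ?thesis
    unfolding cube_eq_PiE euclidean_product_topology by simp
qed

lemma continuous_on_grad_coord:
  assumes C: "C1_grad n f g" and i: "i < n"
  shows "continuous_on (cube n) (\<lambda>y. g y i)"
  unfolding continuous_on_topological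
proof (intro ballI allI impI)
  fix x T assume x: "x \<in> cube n" and T: "open T" "g x i \<in> T"
  obtain e where e: "e > 0" "ball (g x i) e \<subseteq> T"
    using T openE by blast
  obtain d where d: "d > 0"
    and close: "\<And>y. y \<in> Rn n \<Longrightarrow> enorm n (\<lambda>j. y j - x j) < d \<Longrightarrow> enorm n (\<lambda>j. g y j - g x j) < e"
    using C x e(1) unfolding C1_grad_def cube_def by blast
  define \<delta> where "\<delta> = d / (real n + 1)"
  define A where "A = (\<Inter>j<n. (\<lambda>y. y j) -` ball (x j) \<delta>)"
  have "open A"
    unfolding A_def by (intro open_INT ballI open_vimage continuous_intros) auto
  moreover have "x \<in> A"
    using d by (simp add: A_def \<delta>_def)
  moreover have "g y i \<in> T" if y: "y \<in> cube n" "y \<in> A" for y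
  proof -
    have "enorm n (\<lambda>j. y j - x j) \<le> (\<Sum>j<n. \<delta>)"
      using y(2) by (intro order_trans[OF enorm_le_sum_abs] sum_mono)
        (auto simp: A_def dist_real_def abs_minus_commute less_imp_le)
    also have "\<dots> < d"
      using d by (simp add: \<delta>_def field_simps)
    finally have "enorm n (\<lambda>j. g y j - g x j) < e"
      using y(1) close by (auto simp: cube_def)
    then have "\<bar>g y i - g x i\<bar> < e"
      using abs_le_enorm[OF i, of "\<lambda>j. g y j - g x j"] by simp
    then show ?thesis
      using e(2) by (auto simp: dist_real_def abs_minus_commute)
  qed
  ultimately show "\<exists>A. open A \<and> x \<in> A \<and> (\<forall>y\<in>cube n. y \<in> A \<longrightarrow> g y i \<in> T)"
    by blast
qed

lemma C1_grad_bounded: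
  assumes "C1_grad n f g"
  obtains B where "\<And>\<xi>. \<xi> \<in> g ` cube n \<Longrightarrow> (\<Sum>i<n. \<bar>\<xi> i\<bar>) \<le> B"
proof -
  have "continuous_on (cube n) (\<lambda>y. \<Sum>i<n. \<bar>g y i\<bar>)"
    using continuous_on_grad_coord[OF assms] by (intro continuous_intros) auto
  then have "bounded ((\<lambda>y. \<Sum>i<n. \<bar>g y i\<bar>) ` cube n)"
    by (intro compact_imp_bounded compact_continuous_image compact_cube)
  then show ?thesis
    using that by (force simp: bounded_iff)
qed

lemma has_grad_DERIV_line:
  assumes grad: "has_grad n f G w" and u: "u \<in> Rn n"
  shows "((\<lambda>h. f (\<lambda>i. w i + h * u i)) has_real_derivative ip n G u) (at 0)"
proof -
  define N where "N = enorm n u"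
  have N: "N \<ge> 0" by (simp add: N_def enorm_def sum_nonneg)
  have "(\<lambda>h. (f (\<lambda>i. w i + h * u i) - f w) / h) \<midarrow>0\<rightarrow> ip n G u"
    unfolding LIM_eq
  proof (intro allI impI)
    fix r :: real assume r: "r > 0"
    define e where "e = r / (N + 1)"
    have "e > 0" using r N by (simp add: e_def)
    then obtain d where d: "d > 0" and small: "\<forall>v\<in>Rn n. enorm n v < d \<longrightarrow>
        \<bar>f (\<lambda>i. w i + v i) - f w - ip n G v\<bar> \<le> e * enorm n v"
      using grad unfolding has_grad_def by blast
    show "\<exists>s>0. \<forall>h. h \<noteq> 0 \<and> norm (h - 0) < s \<longrightarrow>
        norm ((f (\<lambda>i. w i + h * u i) - f w) / h - ip n G u) < r"
    proof (intro exI[of _ "d / (N + 1)"] conjI allI impI)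
      show "d / (N + 1) > 0" using d N by simp
      fix h :: real assume h: "h \<noteq> 0 \<and> norm (h - 0) < d / (N + 1)"
      have "\<bar>h\<bar> * N \<le> \<bar>h\<bar> * (N + 1)" by (simp add: mult_left_mono)
      also have "\<dots> < d" using h N by (simp add: field_simps)
      finally have "enorm n (\<lambda>i. h * u i) < d" by (simp add: enorm_scale N_def)
      moreover have "(\<lambda>i. h * u i) \<in> Rn n" using u by (simp add: Rn_def)
      ultimately have "\<bar>f (\<lambda>i. w i + h * u i) - f w - ip n G (\<lambda>i. h * u i)\<bar>
          \<le> e * enorm n (\<lambda>i. h * u i)"
        using small by blast
      then have "\<bar>f (\<lambda>i. w i + h * u i) - f w - h * ip n G u\<bar> \<le> e * (\<bar>h\<bar> * N)"
        by (simp add: enorm_scale ip_scale N_def)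
      moreover have "(f (\<lambda>i. w i + h * u i) - f w) / h - ip n G u
          = (f (\<lambda>i. w i + h * u i) - f w - h * ip n G u) / h"
        using h by (simp add: field_simps)
      ultimately have "\<bar>(f (\<lambda>i. w i + h * u i) - f w) / h - ip n G u\<bar> \<le> e * N"
        using h by (simp add: abs_divide pos_divide_le_eq mult_ac)
      also have "\<dots> < r" using r N by (simp add: e_def field_simps)
      finally show "norm ((f (\<lambda>i. w i + h * u i) - f w) / h - ip n G u) < r" by simp
    qed
  qed
  then show ?thesis by (simp add: DERIV_def)
qed

lemma C1_grad_DERIV_line:
  assumes C: "C1_grad n f g" and z: "z \<in> Rn n" and u: "u \<in> Rn n"
  shows "DERIV (\<lambda>t. f (\<lambda>i. z i + t * u i)) t :> ip n (g (\<lambda>i. z i + t * u i)) u"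
proof -
  define w where "w = (\<lambda>i. z i + t * u i)"
  have "w \<in> Rn n" using z u by (simp add: w_def Rn_def)
  then have "((\<lambda>h. f (\<lambda>i. w i + h * u i)) has_real_derivative ip n (g w) u) (at 0)"
    using C u by (intro has_grad_DERIV_line) (auto simp: C1_grad_def)
  moreover have "(\<lambda>h. f (\<lambda>i. w i + h * u i)) = (\<lambda>h. f (\<lambda>i. z i + (h + t) * u i))"
    by (simp add: w_def algebra_simps)
  ultimately show ?thesis
    using DERIV_shift[of "\<lambda>t. f (\<lambda>i. z i + t * u i)" _ 0 t] by (simp add: w_def)
qed

lemma C1_grad_mean_value:
  assumes C: "C1_grad n f g" and x: "x \<in> cube n" and z: "z \<in> cube n"
  obtains w where "w \<in> cube n" "f x - f z = ip n (g w) (\<lambda>i. x i - z i)"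
proof -
  define u where "u = (\<lambda>i. x i - z i)"
  define w where "w s = (\<lambda>i. z i + s * u i)" for s
  have "z \<in> Rn n" "u \<in> Rn n" using x z by (auto simp: cube_def Rn_def u_def)
  then have "DERIV (\<lambda>s. f (w s)) s :> ip n (g (w s)) u" for s
    unfolding w_def by (rule C1_grad_DERIV_line[OF C])
  then obtain s where s: "0 < s" "s < 1" and mvt: "f (w 1) - f (w 0) = ip n (g (w s)) u"
    using MVT2[of 0 1 "\<lambda>s. f (w s)" "\<lambda>s. ip n (g (w s)) u"] by auto
  have "w 1 = x" "w 0 = z" by (auto simp: w_def u_def)
  moreover have "w s \<in> cube n"
  proof -
    have "\<bar>w s i\<bar> \<le> 1" if "i < n" for i
    proof -
      have "\<bar>w s i\<bar> = \<bar>(1 - s) * z i + s * x i\<bar>" by (simp add: w_def u_def algebra_simps)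
      also have "\<dots> \<le> \<bar>(1 - s) * z i\<bar> + \<bar>s * x i\<bar>"
        by (rule abs_triangle_ineq)
      also have "\<dots> = (1 - s) * \<bar>z i\<bar> + s * \<bar>x i\<bar>"
        using s by (simp add: abs_mult)
      also have "\<dots> \<le> (1 - s) * 1 + s * 1"
        using x z that s by (intro add_mono mult_left_mono) (auto simp: cube_def)
      finally show ?thesis by simp
    qed
    moreover have "w s \<in> Rn n" using x z by (simp add: cube_def Rn_def w_def u_def)
    ultimately show ?thesis by (simp add: cube_def)
  qed
  ultimately show ?thesis
    using that mvt unfolding u_def by metis
qed

lemma C1_grad_le_support_fun:
  assumes C: "C1_grad n f g" and "x \<in> cube n" "z \<in> cube n"
  shows "f x \<le> f z + support_fun n (g ` cube n) (\<lambda>i. x i - z i)"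
proof -
  obtain B where B: "\<And>\<xi>. \<xi> \<in> g ` cube n \<Longrightarrow> (\<Sum>i<n. \<bar>\<xi> i\<bar>) \<le> B"
    using C1_grad_bounded[OF C] by blast
  have V: "g ` cube n \<noteq> {}" using zero_in_cube by blast
  obtain w where w: "w \<in> cube n" and mvt: "f x - f z = ip n (g w) (\<lambda>i. x i - z i)"
    using C1_grad_mean_value[OF assms] by blast
  have "ip n (g w) (\<lambda>i. x i - z i) \<le> support_fun n (g ` cube n) (\<lambda>i. x i - z i)"
    using w by (intro support_fun_upper[OF V B] imageI)
  then show ?thesis using mvt by simp
qed

lemma bdd_above_minus_Ient:
  assumes C: "C1_grad n f g"
  shows "bdd_above ((\<lambda>y. f y - Ient n y) ` cube n)"
proof -
  obtain B where B: "\<And>\<xi>. \<xi> \<in> g ` cube n \<Longrightarrow> (\<Sum>i<n. \<bar>\<xi> i\<bar>) \<le> B"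
    using C1_grad_bounded[OF C] by blast
  have V: "g ` cube n \<noteq> {}" using zero_in_cube by blast
  have "f y - Ient n y \<le> f (\<lambda>_. 0) + \<bar>B\<bar> * real n" if y: "y \<in> cube n" for y
  proof -
    have "support_fun n (g ` cube n) (\<lambda>i. y i - 0) \<le> B * (\<Sum>i<n. \<bar>y i\<bar>)"
      using support_fun_le_l1[OF V B, of "\<lambda>i. y i - 0"] by simp
    also have "\<dots> \<le> \<bar>B\<bar> * (\<Sum>i<n. \<bar>y i\<bar>)"
      by (intro mult_right_mono sum_nonneg) auto
    also have "\<dots> \<le> \<bar>B\<bar> * (\<Sum>i<n. 1)"
      using y by (intro mult_left_mono sum_mono) (auto simp: cube_def)
    finally have "support_fun n (g ` cube n) (\<lambda>i. y i - 0) \<le> \<bar>B\<bar> * real n"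
      by simp
    then show ?thesis
      using C1_grad_le_support_fun[OF C y zero_in_cube] Ient_nonneg[OF y] by linarith
  qed
  then show ?thesis by (intro bdd_aboveI) auto
qed

theorem theorem2p6:
  shows "\<exists>\<kappa>>0. \<forall>n. \<forall>(f :: (nat \<Rightarrow> real) \<Rightarrow> real) g.
     C1_grad n f g \<longrightarrow>
     ln (measure_pmf.expectation (mu n) (\<lambda>x. exp (f x)))
       \<le> (SUP y\<in>cube n. f y - Ient n y) + \<kappa> * bV n (g ` cube n)"
proof (intro exI[of _ 2] conjI allI impI)
  fix n and f :: "(nat \<Rightarrow> real) \<Rightarrow> real" and g
  assume C: "C1_grad n f g"
  define V where "V = g ` cube n"
  define M where "M = (SUP y\<in>cube n. f y - Ient n y)"
  obtain B where B: "\<And>\<xi>. \<xi> \<in> V \<Longrightarrow> (\<Sum>i<n. \<bar>\<xi> i\<bar>) \<le> B"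
    using C1_grad_bounded[OF C] unfolding V_def by blast
  have V: "V \<noteq> {}" using zero_in_cube by (auto simp: V_def)
  have "f x \<le> M + Ient n z + support_fun n V (\<lambda>i. x i - z i)" if "x \<in> signs n" "z \<in> cube n" for x z
  proof -
    have "f z - Ient n z \<le> M"
      unfolding M_def using bdd_above_minus_Ient[OF C] that(2) by (intro cSUP_upper)
    moreover have "x \<in> cube n" using that(1) signs_subset_cube by blast
    ultimately show ?thesis
      using C1_grad_le_support_fun[OF C _ that(2), of x] unfolding V_def by linarith
  qed
  then have "ln (sign_avg n (\<lambda>x. exp (f x))) \<le> M + pair_avg n (support_fun n V)"
    by (intro ln_sign_avg_exp_le coordinatewise_convex_support_fun[OF V B])
  moreover have "pair_avg n (support_fun n V) \<le> 2 * sign_avg n (support_fun n V)"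
    by (intro pair_avg_le_twice support_fun_add_le[OF V B])
  ultimately show "ln (measure_pmf.expectation (mu n) (\<lambda>x. exp (f x))) \<le> M + 2 * bV n V"
    by (simp add: expectation_mu bV_eq_sign_avg_support_fun)
qed simp

end
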